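(* Let $\Omega\subset\mathbb{R}^3$ be a bounded domain with $C^2$ boundary satisfying the uniform circumscribed sphere condition with radius $R$. Then $$|x-q^+(x,v)|\lesssim R\,N(x,v)$$ for all $v\in\mathbb{R}^3\setminus\{0\}$ and all $x\in\Gamma^-_v:=\{x\in\partial\Omega: n(x)\cdot v<0\}$, with an absolute implicit constant.
   Context: $n(x)$ is the outward unit normal at $x\in\partial\Omega$. $N(x,v)=-n(q(x,v))\cdot\frac{v}{|v|}$, where $q(x,v)=x-\tau_{x,v}v$ is the backward exit point; for $x\in\partial\Omega$ with $n(x)\cdot v<0$ this gives $q(x,v)=x$ and $N(x,v)=-n(x)\cdot v/|v|$. $q^+(x,v)$ denotes the point where the ray $\{x+sv:s>0\}$ leaves $\Omega$, i.e. the other endpoint of the chord of $\bar\Omega$ through $x$ in direction $v$. Uniform circumscribed sphere condition with radius $R$: every $x\in\partial\Omega$ lies on $\partial B_R$ for some ball $B_R$ of radius $R$ with $\bar\Omega\subset\bar B_R$. *)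

theory Defs
  imports "HOL-Analysis.Analysis"
begin

definition C2_local_defining ::
  "(real^3) set \<Rightarrow> (real^3) set \<Rightarrow> (real^3 \<Rightarrow> real) \<Rightarrow> (real^3 \<Rightarrow> real^3) \<Rightarrow> bool" where
  "C2_local_defining \<Omega> U \<rho> g \<longleftrightarrow>
     open U \<and>
     (\<forall>y\<in>U. (\<rho> has_derivative (\<lambda>h. g y \<bullet> h)) (at y)) \<and>
     (\<exists>g'. (\<forall>y\<in>U. (g has_derivative g' y) (at y)) \<and> (\<forall>h. continuous_on U (\<lambda>y. g' y h))) \<and>
     (\<forall>y\<in>U. g y \<noteq> 0) \<and>
     \<Omega> \<inter> U = {y\<in>U. \<rho> y < 0}"

definition C2_boundary :: "(real^3) set \<Rightarrow> bool" where
  "C2_boundary \<Omega> \<longleftrightarrow> (\<forall>x\<in>frontier \<Omega>. \<exists>U \<rho> g. x \<in> U \<and> C2_local_defining \<Omega> U \<rho> g)"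

definition outward_unit_normal :: "(real^3) set \<Rightarrow> (real^3 \<Rightarrow> real^3) \<Rightarrow> bool" where
  "outward_unit_normal \<Omega> n \<longleftrightarrow>
     (\<forall>x\<in>frontier \<Omega>. \<exists>U \<rho> g. x \<in> U \<and> C2_local_defining \<Omega> U \<rho> g \<and> n x = (1 / norm (g x)) *\<^sub>R g x)"

definition bounded_domain :: "(real^3) set \<Rightarrow> bool" where
  "bounded_domain \<Omega> \<longleftrightarrow> open \<Omega> \<and> connected \<Omega> \<and> bounded \<Omega> \<and> \<Omega> \<noteq> {}"

definition circumscribed_sphere_cond :: "(real^3) set \<Rightarrow> real \<Rightarrow> bool" where
  "circumscribed_sphere_cond \<Omega> R \<longleftrightarrow>
     (\<forall>x\<in>frontier \<Omega>. \<exists>c. dist x c = R \<and> closure \<Omega> \<subseteq> cball c R)"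

definition q_plus :: "(real^3) set \<Rightarrow> real^3 \<Rightarrow> real^3 \<Rightarrow> real^3" where
  "q_plus \<Omega> x v = x + (Inf {t. t > 0 \<and> x + t *\<^sub>R v \<notin> \<Omega>}) *\<^sub>R v"

text \<open>N(x,v) for x on the boundary with n(x)\<cdot>v < 0 (then q(x,v) = x).\<close>
definition N_fun :: "(real^3 \<Rightarrow> real^3) \<Rightarrow> real^3 \<Rightarrow> real^3 \<Rightarrow> real" where
  "N_fun n x v = - (n x \<bullet> v) / norm v"

end

theory Submission
  imports Defs
begin

text \<open>If the ball of radius R around c contains \<Omega> and touches its boundary at x, then x + s w
  lies in the ball for small s > 0 whenever n(x) \<bullet> w < 0, so (x - c) \<bullet> w \<le> 0 for all such w.
  This forces n(x) = (x - c) / R: the outward normal of \<Omega> at x is that of the sphere.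
  The ray from x in direction v leaves the ball at the second intersection with the sphere,
  at parameter -2 (x - c) \<bullet> v / |v|^2, hence |x - q^+(x,v)| \<le> -2 (x - c) \<bullet> v / |v| = 2 R N(x,v).\<close>

lemma frontier_sublevel_set_zero:
  fixes \<rho> :: "'a::t2_space \<Rightarrow> real"
  assumes "open \<Omega>" "x \<in> frontier \<Omega>" "open U" "x \<in> U" "\<Omega> \<inter> U = {y\<in>U. \<rho> y < 0}"
    and "isCont \<rho> x"
  shows "\<rho> x = 0"
proof -
  have "x \<notin> \<Omega>" using assms(1,2) by (simp add: frontier_def interior_open)
  then have "\<not> \<rho> x < 0" using assms(4,5) by blast
  moreover have "\<not> \<rho> x > 0"
  proof
    assume "\<rho> x > 0"
    then have "\<forall>\<^sub>F y in at x. \<rho> y > 0"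
      using assms(6) isCont_def order_tendstoD(1) by metis
    moreover have "\<forall>\<^sub>F y in at x. y \<in> U" using assms(3,4) eventually_at_topological by blast
    ultimately have "\<forall>\<^sub>F y in at x. y \<notin> \<Omega>"
      by eventually_elim (metis assms(5) IntI mem_Collect_eq less_asym)
    moreover have "x islimpt \<Omega>"
      using assms(2) \<open>x \<notin> \<Omega>\<close> by (simp add: frontier_def islimpt_in_closure)
    ultimately show False by (simp add: islimpt_iff_eventually)
  qed
  ultimately show ?thesis by linarith
qed

lemma C2_local_defining_descent_enters:
  assumes "C2_local_defining \<Omega> U \<rho> g" "x \<in> U" "\<rho> x = 0" "g x \<bullet> w < 0"
  shows "\<forall>\<^sub>F s in at_right 0. x + s *\<^sub>R w \<in> \<Omega>"
proof -
  have U: "open U" and eq: "\<Omega> \<inter> U = {y\<in>U. \<rho> y < 0}"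
    and d: "(\<rho> has_derivative (\<lambda>h. g x \<bullet> h)) (at x)"
    using assms(1,2) unfolding C2_local_defining_def by auto
  have "((\<lambda>s. \<rho> (x + s *\<^sub>R w)) has_real_derivative g x \<bullet> w) (at 0)"
    by (rule has_derivative_imp_has_field_derivative[OF has_derivative_compose[of "\<lambda>s. x + s *\<^sub>R w"]])
      (use d in \<open>auto intro!: derivative_eq_intros\<close>)
  from DERIV_neg_dec_right[OF this assms(4)]
  have "\<forall>\<^sub>F s in at_right 0. \<rho> (x + s *\<^sub>R w) < 0"
    using assms(3) by (auto simp: eventually_at_right_field)
  moreover have "((\<lambda>s. x + s *\<^sub>R w) \<longlongrightarrow> x) (at_right 0)"
    by (auto intro!: tendsto_eq_intros)
  then have "\<forall>\<^sub>F s in at_right 0. x + s *\<^sub>R w \<in> U"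
    using U assms(2) topological_tendstoD by blast
  ultimately show ?thesis by eventually_elim (use eq in auto)
qed

lemma sphere_tangent_inner_nonpos:
  fixes x c w :: "'a::real_inner"
  assumes "dist x c = R" "\<forall>\<^sub>F s in at_right 0. x + s *\<^sub>R w \<in> cball c R"
  shows "(x - c) \<bullet> w \<le> 0"
proof (rule ccontr)
  define a where "a = x - c"
  assume "\<not> (x - c) \<bullet> w \<le> 0"
  then have aw: "a \<bullet> w > 0" by (simp add: a_def)
  have "((\<lambda>s. s * (w \<bullet> w)) \<longlongrightarrow> 0) (at_right 0)"
    by (auto intro!: tendsto_eq_intros)
  then have "\<forall>\<^sub>F s in at_right 0. s * (w \<bullet> w) < a \<bullet> w"
    using aw order_tendstoD(2) by blast
  then have "\<forall>\<^sub>F s in at_right 0. s > 0 \<and> s * (w \<bullet> w) < a \<bullet> w"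
    using eventually_at_right_less eventually_conj by blast
  with assms(2) have "\<forall>\<^sub>F s in at_right (0::real). False"
  proof eventually_elim
    case (elim s)
    then have "norm (a + s *\<^sub>R w) \<le> norm a"
      using assms(1) by (simp add: a_def dist_norm norm_minus_commute algebra_simps)
    then have "a \<bullet> a + 2 * s * (a \<bullet> w) + s\<^sup>2 * (w \<bullet> w) \<le> a \<bullet> a"
      by (simp add: norm_le inner_add_left inner_add_right inner_commute power2_eq_square algebra_simps)
    moreover have "0 < s * (a \<bullet> w)" and "0 \<le> s\<^sup>2 * (w \<bullet> w)"
      using elim aw by simp_all
    ultimately show False by linarith
  qed
  then show False by simp
qed

lemma halfspace_inclusion_imp_nonneg_multiple:
  fixes a u :: "'a::real_inner"
  assumes "u \<noteq> 0" and halfspace: "\<And>w. u \<bullet> w < 0 \<Longrightarrow> a \<bullet> w \<le> 0"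
  shows "\<exists>k\<ge>0. a = k *\<^sub>R u"
proof -
  define k where "k = (a \<bullet> u) / (u \<bullet> u)"
  define p where "p = a - k *\<^sub>R u"
  have uu: "u \<bullet> u > 0" using assms(1) by simp
  have pu: "p \<bullet> u = 0" using uu by (simp add: p_def k_def inner_diff_left)
  have ap: "a \<bullet> p = p \<bullet> p"
    using pu by (simp add: p_def inner_diff_left inner_diff_right inner_commute)
  have au: "a \<bullet> u \<ge> 0" using halfspace[of "- u"] uu by simp
  have small: "p \<bullet> p \<le> \<delta> * (a \<bullet> u)" if "\<delta> > 0" for \<delta>
  proof -
    have "u \<bullet> (p - \<delta> *\<^sub>R u) < 0"
      using pu uu that by (simp add: inner_diff_right inner_commute)
    then have "a \<bullet> (p - \<delta> *\<^sub>R u) \<le> 0" by (rule halfspace)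
    then show ?thesis by (simp add: inner_diff_right ap)
  qed
  have "p \<bullet> p \<le> 0"
  proof (rule field_le_epsilon)
    fix e :: real
    assume "e > 0"
    then have "p \<bullet> p \<le> e / (a \<bullet> u + 1) * (a \<bullet> u)"
      using au small[of "e / (a \<bullet> u + 1)"] by simp
    also have "\<dots> \<le> e" using au \<open>e > 0\<close> by (simp add: field_simps)
    finally show "p \<bullet> p \<le> 0 + e" by simp
  qed
  then have "p = 0" by (metis inner_gt_zero_iff not_less)
  moreover have "k \<ge> 0" using au uu by (simp add: k_def)
  ultimately show ?thesis by (auto simp: p_def)
qed

text \<open>The bound on t is the parameter of the second intersection of the line through x
  with the sphere.\<close>
lemma sphere_ray_outside_cball:
  fixes x c v :: "'a::real_inner"
  assumes "dist x c = R" "v \<noteq> 0" "0 < t" "- 2 * ((x - c) \<bullet> v) / (v \<bullet> v) < t"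
  shows "x + t *\<^sub>R v \<notin> cball c R"
proof -
  define a where "a = x - c"
  define T where "T = - 2 * (a \<bullet> v) / (v \<bullet> v)"
  have vv: "v \<bullet> v > 0" using assms(2) by simp
  have "(a + t *\<^sub>R v) \<bullet> (a + t *\<^sub>R v) = a \<bullet> a + 2 * t * (a \<bullet> v) + t\<^sup>2 * (v \<bullet> v)"
    by (simp add: inner_add_left inner_add_right inner_commute power2_eq_square algebra_simps)
  also have "\<dots> = a \<bullet> a + t * (v \<bullet> v) * (t - T)"
    using vv by (simp add: T_def power2_eq_square field_simps)
  finally have "(a + t *\<^sub>R v) \<bullet> (a + t *\<^sub>R v) > a \<bullet> a"
    using assms(3,4) vv by (simp add: T_def a_def)
  then have "norm a < norm (a + t *\<^sub>R v)" by (simp add: norm_lt)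
  then show ?thesis
    using assms(1) by (simp add: a_def dist_norm algebra_simps norm_minus_commute[of c])
qed

lemma dist_q_plus_le:
  assumes "0 \<le> T" and outside: "\<And>t. T < t \<Longrightarrow> x + t *\<^sub>R v \<notin> \<Omega>"
  shows "dist x (q_plus \<Omega> x v) \<le> T * norm v"
proof -
  define S where "S = {t. t > 0 \<and> x + t *\<^sub>R v \<notin> \<Omega>}"
  have S: "T + e \<in> S" if "e > 0" for e
    using assms(1) outside[of "T + e"] that by (simp add: S_def)
  have "bdd_below S" by (rule bdd_belowI[of _ 0]) (simp add: S_def)
  have "Inf S \<le> T"
  proof (rule field_le_epsilon)
    fix e :: real
    assume "e > 0"
    with S \<open>bdd_below S\<close> show "Inf S \<le> T + e" by (simp add: cInf_lower)
  qed
  moreover have "0 \<le> Inf S"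
    using S[of 1] by (intro cInf_greatest) (auto simp: S_def)
  moreover have "dist x (q_plus \<Omega> x v) = \<bar>Inf S\<bar> * norm v"
    by (simp add: q_plus_def S_def dist_norm)
  ultimately show ?thesis by (simp add: mult_right_mono)
qed

lemma outward_normal_at_circumscribed_sphere:
  assumes "open \<Omega>" "outward_unit_normal \<Omega> n" "x \<in> frontier \<Omega>"
    and sphere: "dist x c = R" "R > 0" "closure \<Omega> \<subseteq> cball c R"
  shows "n x = (1 / R) *\<^sub>R (x - c)"
proof -
  obtain U \<rho> g where U: "x \<in> U" "C2_local_defining \<Omega> U \<rho> g"
    and nx: "n x = (1 / norm (g x)) *\<^sub>R g x"
    using assms(2,3) unfolding outward_unit_normal_def by blast
  have "g x \<noteq> 0" and "isCont \<rho> x"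
    using U has_derivative_continuous unfolding C2_local_defining_def by blast+
  then have "\<rho> x = 0"
    using U assms(1,3) frontier_sublevel_set_zero unfolding C2_local_defining_def by blast
  have "(x - c) \<bullet> w \<le> 0" if "g x \<bullet> w < 0" for w
  proof (rule sphere_tangent_inner_nonpos[OF sphere(1)])
    show "\<forall>\<^sub>F s in at_right 0. x + s *\<^sub>R w \<in> cball c R"
      using C2_local_defining_descent_enters[OF U(2,1) \<open>\<rho> x = 0\<close> that]
      by eventually_elim (use sphere(3) closure_subset in blast)
  qed
  with \<open>g x \<noteq> 0\<close> obtain k where k: "k \<ge> 0" "x - c = k *\<^sub>R g x"
    using halfspace_inclusion_imp_nonneg_multiple by blast
  then have "R = k * norm (g x)"
    using sphere(1) by (simp add: dist_norm)
  then have "k \<noteq> 0" using sphere(2) by auto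
  then show ?thesis using \<open>R = k * norm (g x)\<close> \<open>g x \<noteq> 0\<close> k(2) by (simp add: nx)
qed

lemma dist_q_plus_le_chord:
  assumes "dist x c = R" "\<Omega> \<subseteq> cball c R" "v \<noteq> 0" "(x - c) \<bullet> v \<le> 0"
  shows "dist x (q_plus \<Omega> x v) \<le> - 2 * ((x - c) \<bullet> v) / norm v"
proof -
  define T where "T = - 2 * ((x - c) \<bullet> v) / (v \<bullet> v)"
  have "0 \<le> T"
    unfolding T_def using assms(3,4) by (intro divide_nonneg_pos) simp_all
  have "x + t *\<^sub>R v \<notin> \<Omega>" if "T < t" for t
  proof -
    have "x + t *\<^sub>R v \<notin> cball c R"
      using sphere_ray_outside_cball[OF assms(1,3)] \<open>0 \<le> T\<close> that by (simp add: T_def)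
    then show ?thesis using assms(2) by blast
  qed
  with \<open>0 \<le> T\<close> have "dist x (q_plus \<Omega> x v) \<le> T * norm v"
    by (rule dist_q_plus_le)
  also have "T * norm v = - 2 * ((x - c) \<bullet> v) / norm v"
    using assms(3) by (simp add: T_def power2_norm_eq_inner[symmetric] power2_eq_square)
  finally show ?thesis .
qed

theorem proposition2p7:
  shows "\<exists>C>0. \<forall>(\<Omega>::(real^3) set) n R.
           bounded_domain \<Omega> \<and> C2_boundary \<Omega> \<and> outward_unit_normal \<Omega> n \<and> R > 0 \<and>
           circumscribed_sphere_cond \<Omega> R \<longrightarrow>
           (\<forall>v x. v \<noteq> 0 \<and> x \<in> frontier \<Omega> \<and> n x \<bullet> v < 0 \<longrightarrow>
              dist x (q_plus \<Omega> x v) \<le> C * R * N_fun n x v)"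
proof (intro exI[of _ 2] conjI allI impI)
  fix \<Omega> :: "(real^3) set" and n R v x
  assume "bounded_domain \<Omega> \<and> C2_boundary \<Omega> \<and> outward_unit_normal \<Omega> n \<and> R > 0 \<and>
    circumscribed_sphere_cond \<Omega> R"
  then have "open \<Omega>" "outward_unit_normal \<Omega> n" "R > 0" "circumscribed_sphere_cond \<Omega> R"
    by (simp_all add: bounded_domain_def)
  assume "v \<noteq> 0 \<and> x \<in> frontier \<Omega> \<and> n x \<bullet> v < 0"
  then have "v \<noteq> 0" "x \<in> frontier \<Omega>" "n x \<bullet> v < 0" by simp_all
  obtain c where c: "dist x c = R" "closure \<Omega> \<subseteq> cball c R"
    using \<open>circumscribed_sphere_cond \<Omega> R\<close> \<open>x \<in> frontier \<Omega>\<close>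
    unfolding circumscribed_sphere_cond_def by blast
  have nx: "n x = (1 / R) *\<^sub>R (x - c)"
    using outward_normal_at_circumscribed_sphere \<open>open \<Omega>\<close> \<open>outward_unit_normal \<Omega> n\<close>
      \<open>x \<in> frontier \<Omega>\<close> c \<open>R > 0\<close> by blast
  then have "(x - c) \<bullet> v < 0" using \<open>n x \<bullet> v < 0\<close> \<open>R > 0\<close> by (simp add: divide_less_0_iff)
  then have "dist x (q_plus \<Omega> x v) \<le> - 2 * ((x - c) \<bullet> v) / norm v"
    using dist_q_plus_le_chord c closure_subset \<open>v \<noteq> 0\<close> by (meson order.trans less_imp_le)
  also have "\<dots> = 2 * R * N_fun n x v"
    using \<open>R > 0\<close> by (simp add: N_fun_def nx)
  finally show "dist x (q_plus \<Omega> x v) \<le> 2 * R * N_fun n x v" .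
qed simp

end
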